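(* Let $N\geq 1$ be an integer, $0<\epsilon<1$, and $0<\gamma\leq 1/2$. Let $x_0,\ldots,x_{N-1}$ be real numbers satisfying $|x_j - j/N|\leq \gamma/N$ for $0\leq j\leq N-1$, and let $\omega_0,\ldots,\omega_{N-1}\in[0,N]$. Consider the $N\times N$ matrix \[ A_{jk} = e^{-2\pi i (x_j-j/N)\omega_k}, \qquad 0\leq j,k\leq N-1. \] Then there exists a matrix $A_K$ of rank (at most) $K$ such that $\|A-A_K\|_{\max}\leq \epsilon$, where \[ K = \max\left\{3, \Big\lceil 5\gamma\, e^{W\left(\log(140/\epsilon)/(5\gamma)\right)}\Big\rceil\right\}, \] and $K = \mathcal{O}\left(\log(1/\epsilon)/\log\log(1/\epsilon)\right)$ as $\epsilon\to 0$.
   Context: $\|B\|_{\max}=\max_{j,k}|B_{jk}|$ denotes the absolute maximum entry of a matrix $B$. $W$ denotes the Lambert W function (principal branch), and $\lceil t\rceil$ is the smallest integer $\ge t$. *)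

theory Defs
  imports "HOL-Analysis.Analysis" "HOL-Library.Landau_Symbols" "Jordan_Normal_Form.DL_Rank"
begin

definition lambertW :: "real \<Rightarrow> real" where
  "lambertW x = (THE w. w \<ge> -1 \<and> w * exp w = x)"

definition Kbound :: "real \<Rightarrow> real \<Rightarrow> nat" where
  "Kbound \<gamma> \<epsilon> = max 3 (nat \<lceil>5 * \<gamma> * exp (lambertW (ln (140 / \<epsilon>) / (5 * \<gamma>)))\<rceil>)"

definition nudft_mat :: "nat \<Rightarrow> (nat \<Rightarrow> real) \<Rightarrow> (nat \<Rightarrow> real) \<Rightarrow> complex mat" where
  "nudft_mat N x \<omega> = mat N N (\<lambda>(j, k).
     exp (- (2 * of_real pi * \<i>) * of_real ((x j - real j / real N) * \<omega> k)))"

end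

(*
  Write beta_j = -pi N (x_j - j/N), so |beta_j| <= pi gamma, and s_k = 2 omega_k / N - 1 in [-1, 1];
  then A_jk = e^(i beta_j) e^(i beta_j s_k). Replacing t |-> e^(i beta_j t) by its interpolant at the
  K Chebyshev nodes t_0, ..., t_(K-1) gives A_jk ~ sum_i e^(i beta_j) e^(i beta_j t_i) l_i(s_k), a sum
  of K rank-one matrices. The interpolation remainder together with the Chebyshev bound
  |prod_i (s - t_i)| <= 2^(1-K) on [-1, 1] and K! >= (K/e)^K bounds the error by 140 (5 gamma / K)^K,
  and the Lambert-W choice of K is exactly what makes this at most epsilon. Since W(y) >= (ln y)/2,
  K = O(L / ln L) with L = ln (140 / epsilon).
*)
theory Submission
  imports Defs "HOL-Real_Asymp.Real_Asymp"
begin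

section \<open>Polynomial interpolation error\<close>

lemma higher_Rolle:
  fixes D :: "nat \<Rightarrow> real \<Rightarrow> real"
  assumes "\<And>m t. m < n \<Longrightarrow> (D m has_real_derivative D (Suc m) t) (at t)"
    and "finite Z" "card Z = Suc n" "\<And>z. z \<in> Z \<Longrightarrow> D 0 z = 0" "Z \<subseteq> {lo..hi}"
  shows "\<exists>\<xi>\<in>{lo..hi}. D n \<xi> = 0"
  using assms
proof (induction n arbitrary: D Z)
  case 0
  then obtain z where "Z = {z}" by (metis One_nat_def card_1_singletonE)
  then show ?case using 0 by auto
next
  case (Suc n)
  define zs where "zs = sorted_list_of_set Z"
  have len: "length zs = Suc (Suc n)" using Suc.prems zs_def by simp
  have sorted: "sorted_wrt (<) zs" unfolding zs_def by (rule strict_sorted_list_of_set)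
  have zs_in: "i < length zs \<Longrightarrow> zs ! i \<in> Z" for i
    using Suc.prems(2) zs_def nth_mem set_sorted_list_of_set by metis
  have D0: "(D 0 has_real_derivative D 1 t) (at t)" for t using Suc.prems(1) by simp
  have "\<exists>z. zs ! i < z \<and> z < zs ! Suc i \<and> D 1 z = 0" if i: "i < Suc n" for i
  proof -
    have "zs ! i < zs ! Suc i" using sorted len i by (simp add: sorted_wrt_nth_less)
    moreover have "D 0 (zs ! i) = D 0 (zs ! Suc i)" using Suc.prems(4) zs_in len i by simp
    moreover have "continuous_on {zs ! i..zs ! Suc i} (D 0)"
      by (meson DERIV_isCont continuous_at_imp_continuous_on D0)
    moreover have "D 0 differentiable (at t)" for t using D0 real_differentiable_def by blast
    ultimately obtain z where "zs ! i < z" "z < zs ! Suc i" "DERIV (D 0) z :> 0"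
      using Rolle by metis
    then show ?thesis using DERIV_unique[OF D0] by blast
  qed
  then obtain \<xi> where \<xi>: "\<And>i. i < Suc n \<Longrightarrow> zs ! i < \<xi> i \<and> \<xi> i < zs ! Suc i \<and> D 1 (\<xi> i) = 0"
    by metis
  have \<xi>_mono: "\<xi> i < \<xi> j" if "i < j" "j < Suc n" for i j
  proof -
    have "\<xi> i < zs ! Suc i" using \<xi> that by simp
    also have "zs ! Suc i \<le> zs ! j"
      using sorted_wrt_nth_less[OF sorted, of "Suc i" j] len that by (cases "Suc i = j") auto
    also have "\<dots> < \<xi> j" using \<xi> that by simp
    finally show ?thesis .
  qed
  then have "inj_on \<xi> {..<Suc n}"
    by (metis inj_onI lessThan_iff linorder_neqE_nat order_less_irrefl)
  moreover have "\<xi> ` {..<Suc n} \<subseteq> {lo..hi}"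
  proof
    fix z assume "z \<in> \<xi> ` {..<Suc n}"
    then obtain i where i: "i < Suc n" "z = \<xi> i" by auto
    have "zs ! i \<in> {lo..hi}" "zs ! Suc i \<in> {lo..hi}"
      using zs_in[of i] zs_in[of "Suc i"] len i Suc.prems(5) by (auto simp del: atLeastAtMost_iff)
    then show "z \<in> {lo..hi}" using \<xi>[OF i(1)] i by auto
  qed
  ultimately have "\<exists>\<xi>\<in>{lo..hi}. D (Suc n) \<xi> = 0"
    using Suc.IH[of "\<lambda>m. D (Suc m)" "\<xi> ` {..<Suc n}"] Suc.prems(1) \<xi> card_image by fastforce
  then show ?case by simp
qed

lemma higher_pderiv_eq_0:
  fixes q :: "'a :: idom poly"
  assumes "degree q < n"
  shows "(pderiv ^^ n) q = 0"
proof (rule poly_eqI)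
  fix k
  have "coeff q (k + n) = 0" using assms by (intro coeff_eq_0) simp
  then show "coeff ((pderiv ^^ n) q) k = coeff 0 k" by (simp add: coeff_higher_pderiv)
qed

lemma higher_pderiv_monic:
  fixes q :: "'a :: {idom, ring_char_0} poly"
  assumes "degree q = n" "coeff q n = 1"
  shows "(pderiv ^^ n) q = [:fact n:]"
proof (rule poly_eqI)
  fix k
  show "coeff ((pderiv ^^ n) q) k = coeff [:fact n:] k"
  proof (cases k)
    case 0
    then show ?thesis using assms by (simp add: coeff_higher_pderiv pochhammer_fact)
  next
    case (Suc k')
    have "coeff q (k + n) = 0" using assms Suc by (intro coeff_eq_0) simp
    then show ?thesis using Suc by (simp add: coeff_higher_pderiv)
  qed
qed

text \<open>
  The classical remainder formula for interpolation at the roots of a monic polynomial \<open>w\<close>: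
  \<open>F\<^sub>0 - p - C w\<close> with \<open>C\<close> chosen to vanish also at \<open>x\<close> has \<open>K + 1\<close> zeros, so its
  \<open>K\<close>-th derivative \<open>F\<^sub>K - C K!\<close> has one.
\<close>
lemma interpolation_error:
  fixes F :: "nat \<Rightarrow> real \<Rightarrow> real" and t :: "nat \<Rightarrow> real" and p w :: "real poly"
  assumes deriv: "\<And>m y. (F m has_real_derivative F (Suc m) y) (at y)"
    and bound: "\<And>y. \<bar>F K y\<bar> \<le> M"
    and t_in: "\<And>i. i < K \<Longrightarrow> t i \<in> {lo..hi}" and t_inj: "inj_on t {..<K}"
    and w_degree: "degree w = K" and w_monic: "coeff w K = 1"
    and w_roots: "\<And>i. i < K \<Longrightarrow> poly w (t i) = 0"
    and p_degree: "degree p < K" and p_interpolates: "\<And>i. i < K \<Longrightarrow> poly p (t i) = F 0 (t i)"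
    and x: "x \<in> {lo..hi}"
  shows "\<bar>F 0 x - poly p x\<bar> \<le> M / fact K * \<bar>poly w x\<bar>"
proof (cases "x \<in> t ` {..<K}")
  case True
  then show ?thesis using p_interpolates w_roots by auto
next
  case False
  have w0: "w \<noteq> 0" using w_monic by auto
  have card_Z: "card (insert x (t ` {..<K})) = Suc K"
    using False card_image[OF t_inj] by simp
  have wx: "poly w x \<noteq> 0"
  proof
    assume "poly w x = 0"
    then have "insert x (t ` {..<K}) \<subseteq> {x. poly w x = 0}" using w_roots by auto
    then have "card (insert x (t ` {..<K})) \<le> card {x. poly w x = 0}"
      by (intro card_mono poly_roots_finite w0)
    also have "\<dots> \<le> K" using card_poly_roots_bound[OF w0] w_degree by simp
    finally show False using card_Z by simp
  qed
  define C where "C = (F 0 x - poly p x) / poly w x"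
  define D where "D = (\<lambda>m y. F m y - poly ((pderiv ^^ m) p) y - C * poly ((pderiv ^^ m) w) y)"
  have "(D m has_real_derivative D (Suc m) y) (at y)" for m y
    unfolding D_def by (auto intro!: derivative_eq_intros deriv)
  moreover have "D 0 z = 0" if "z \<in> insert x (t ` {..<K})" for z
    using that wx p_interpolates w_roots unfolding D_def C_def by auto
  moreover have "insert x (t ` {..<K}) \<subseteq> {lo..hi}" using x t_in by auto
  ultimately obtain \<xi> where "D K \<xi> = 0" using higher_Rolle[OF _ _ card_Z] by blast
  then have "C = F K \<xi> / fact K"
    unfolding D_def by (simp add: higher_pderiv_eq_0[OF p_degree] higher_pderiv_monic[OF w_degree w_monic])
  moreover have "F 0 x - poly p x = C * poly w x" unfolding C_def using wx by simp
  ultimately have "\<bar>F 0 x - poly p x\<bar> = \<bar>F K \<xi>\<bar> / fact K * \<bar>poly w x\<bar>" by (simp add: abs_mult)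
  also have "\<dots> \<le> M / fact K * \<bar>poly w x\<bar>"
    by (intro mult_right_mono divide_right_mono bound) auto
  finally show ?thesis .
qed

section \<open>Chebyshev polynomials and interpolation at the Chebyshev nodes\<close>

fun chebyshev :: "nat \<Rightarrow> real poly" where
  "chebyshev 0 = 1"
| "chebyshev (Suc 0) = [:0, 1:]"
| "chebyshev (Suc (Suc n)) = [:0, 2:] * chebyshev (Suc n) - chebyshev n"

lemma poly_chebyshev_cos: "poly (chebyshev n) (cos \<theta>) = cos (real n * \<theta>)"
proof (induction n rule: chebyshev.induct)
  case (3 n)
  have "cos (real (Suc (Suc n)) * \<theta>) = cos (real (Suc n) * \<theta> + \<theta>)"
    by (simp add: algebra_simps)
  also have "\<dots> = 2 * cos \<theta> * cos (real (Suc n) * \<theta>) - cos (real (Suc n) * \<theta> - \<theta>)"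
    by (simp add: cos_add cos_diff)
  also have "cos (real (Suc n) * \<theta> - \<theta>) = cos (real n * \<theta>)" by (simp add: algebra_simps)
  finally show ?case using 3 by simp
qed auto

lemma abs_poly_chebyshev_le_1: "\<bar>x\<bar> \<le> 1 \<Longrightarrow> \<bar>poly (chebyshev n) x\<bar> \<le> 1"
  using poly_chebyshev_cos[of n "arccos x"] by (simp add: cos_arccos_abs)

lemma degree_chebyshev_le: "degree (chebyshev n) \<le> n"
proof (induction n rule: chebyshev.induct)
  case (3 n)
  have "degree ([:0, 2:] * chebyshev (Suc n)) \<le> Suc (Suc n)"
    using degree_mult_le[of "[:0, 2:]" "chebyshev (Suc n)"] 3 by simp
  moreover have "degree (chebyshev n) \<le> Suc (Suc n)" using 3 by simp
  ultimately show ?case by (simp add: degree_diff_le)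
qed auto

lemma coeff_chebyshev_Suc: "coeff (chebyshev (Suc n)) (Suc n) = 2 ^ n"
proof (induction n rule: nat_less_induct)
  case (1 n)
  show ?case
  proof (cases n)
    case (Suc m)
    have "coeff (chebyshev m) (Suc (Suc m)) = 0"
      using degree_chebyshev_le[of m] by (intro coeff_eq_0) simp
    then show ?thesis using 1 Suc by (simp add: mult_pCons_left)
  qed simp
qed

lemma degree_chebyshev: "degree (chebyshev n) = n"
proof (cases n)
  case (Suc m)
  then have "n \<le> degree (chebyshev n)" using coeff_chebyshev_Suc[of m] by (intro le_degree) simp
  then show ?thesis using degree_chebyshev_le[of n] by simp
qed simp

definition cheb_node :: "nat \<Rightarrow> nat \<Rightarrow> real" where
  "cheb_node K i = cos ((2 * real i + 1) * pi / (2 * real K))"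

lemma cheb_node_in: "cheb_node K i \<in> {-1..1}"
  unfolding cheb_node_def by auto

lemma poly_chebyshev_cheb_node: "i < K \<Longrightarrow> poly (chebyshev K) (cheb_node K i) = 0"
proof -
  assume "i < K"
  then have "real K * ((2 * real i + 1) * pi / (2 * real K)) = real i * pi + pi / 2"
    by (simp add: field_simps)
  then show ?thesis unfolding cheb_node_def poly_chebyshev_cos by (simp add: cos_add)
qed

lemma cheb_node_angle:
  assumes "i < K"
  shows "0 \<le> (2 * real i + 1) * pi / (2 * real K) \<and> (2 * real i + 1) * pi / (2 * real K) \<le> pi"
proof -
  have "(2 * real i + 1) * pi \<le> 2 * real K * pi" using assms by (intro mult_right_mono) auto
  then show ?thesis using assms by (simp add: divide_le_eq mult.commute)
qed

lemma inj_on_cheb_node: "inj_on (cheb_node K) {..<K}"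
proof (rule inj_onI)
  fix i j assume ij: "i \<in> {..<K}" "j \<in> {..<K}" and "cheb_node K i = cheb_node K j"
  moreover note cheb_node_angle[of i K] cheb_node_angle[of j K]
  ultimately have "(2 * real i + 1) * pi / (2 * real K) = (2 * real j + 1) * pi / (2 * real K)"
    unfolding cheb_node_def by - (rule cos_inj_pi, auto)
  then show "i = j" using ij by (auto simp: field_simps)
qed

definition cheb_lagrange :: "nat \<Rightarrow> nat \<Rightarrow> real poly" where
  "cheb_lagrange K i =
     Polynomial.smult (1 / (\<Prod>j\<in>{..<K} - {i}. cheb_node K i - cheb_node K j))
       (\<Prod>j\<in>{..<K} - {i}. [:- cheb_node K j, 1:])"

lemma degree_cheb_lagrange: "i < K \<Longrightarrow> degree (cheb_lagrange K i) < K"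
proof -
  assume i: "i < K"
  have "degree (\<Prod>j\<in>{..<K} - {i}. [:- cheb_node K j, 1:]) \<le> card ({..<K} - {i})"
    using degree_prod_sum_le[of "{..<K} - {i}" "\<lambda>j. [:- cheb_node K j, 1:]"] by (simp add: o_def)
  also have "\<dots> < K" using i by simp
  finally show ?thesis unfolding cheb_lagrange_def using degree_smult_le le_less_trans by blast
qed

lemma poly_cheb_lagrange_cheb_node:
  assumes "i < K" "k < K"
  shows "poly (cheb_lagrange K i) (cheb_node K k) = (if k = i then 1 else 0)"
proof (cases "k = i")
  case True
  have "(\<Prod>j\<in>{..<K} - {i}. cheb_node K i - cheb_node K j) \<noteq> 0"
    using inj_on_cheb_node[of K] assms by (auto simp: inj_on_def)
  then show ?thesis using True by (simp add: cheb_lagrange_def poly_prod)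
next
  case False
  have "(\<Prod>j\<in>{..<K} - {i}. poly [:- cheb_node K j, 1:] (cheb_node K k)) = 0"
    using assms False by (intro prod_zero) auto
  then show ?thesis using False by (simp add: cheb_lagrange_def poly_prod)
qed

lemma chebyshev_interpolation_error:
  fixes F :: "nat \<Rightarrow> real \<Rightarrow> real"
  assumes K: "K \<ge> 1"
    and deriv: "\<And>m y. (F m has_real_derivative F (Suc m) y) (at y)"
    and bound: "\<And>y. \<bar>F K y\<bar> \<le> M"
    and x: "x \<in> {-1..1}"
  shows "\<bar>F 0 x - (\<Sum>i<K. F 0 (cheb_node K i) * poly (cheb_lagrange K i) x)\<bar> \<le> M / fact K / 2 ^ (K - 1)"
proof -
  define p where "p = (\<Sum>i<K. Polynomial.smult (F 0 (cheb_node K i)) (cheb_lagrange K i))"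
  have p_degree: "degree p < K" unfolding p_def using K degree_cheb_lagrange
    by (intro degree_sum_less) (auto intro: le_less_trans[OF degree_smult_le])
  have p_interpolates: "poly p (cheb_node K k) = F 0 (cheb_node K k)" if k: "k < K" for k
  proof -
    have "poly p (cheb_node K k) = (\<Sum>i<K. if k = i then F 0 (cheb_node K k) else 0)"
      unfolding p_def poly_sum using k by (intro sum.cong) (auto simp: poly_cheb_lagrange_cheb_node)
    then show ?thesis using k by simp
  qed
  obtain n where Kn: "K = Suc n" using K by (cases K) auto
  define w where "w = Polynomial.smult (1 / 2 ^ (K - 1)) (chebyshev K)"
  have w_degree: "degree w = K" unfolding w_def by (simp add: degree_chebyshev)
  have w_monic: "coeff w K = 1" unfolding w_def Kn by (simp add: coeff_chebyshev_Suc)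
  have w_roots: "poly w (cheb_node K i) = 0" if "i < K" for i
    unfolding w_def using poly_chebyshev_cheb_node[OF that] by simp
  have "\<bar>F 0 x - poly p x\<bar> \<le> M / fact K * \<bar>poly w x\<bar>"
    by (rule interpolation_error[OF deriv bound cheb_node_in inj_on_cheb_node
          w_degree w_monic w_roots p_degree p_interpolates x])
  also have "\<bar>poly (chebyshev K) x\<bar> \<le> 1" using x by (intro abs_poly_chebyshev_le_1) auto
  then have "\<bar>poly w x\<bar> \<le> 1 / 2 ^ (K - 1)" unfolding w_def by (simp add: abs_mult divide_le_cancel)
  then have "M / fact K * \<bar>poly w x\<bar> \<le> M / fact K * (1 / 2 ^ (K - 1))"
    using order_trans[OF abs_ge_zero bound] by (intro mult_left_mono) auto
  finally show ?thesis unfolding p_def poly_sum by simp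
qed

lemma cos_chebyshev_interpolation_error:
  assumes "K \<ge> 1" "x \<in> {-1..1}"
  shows "\<bar>cos (b * x + \<phi>) - (\<Sum>i<K. cos (b * cheb_node K i + \<phi>) * poly (cheb_lagrange K i) x)\<bar>
           \<le> \<bar>b\<bar> ^ K / fact K / 2 ^ (K - 1)"
proof -
  define F where "F = (\<lambda>m y. b ^ m * cos (b * y + \<phi> + real m * (pi / 2)))"
  have deriv: "(F m has_real_derivative F (Suc m) y) (at y)" for m y
  proof -
    have "b * y + \<phi> + real (Suc m) * (pi / 2) = (b * y + \<phi> + real m * (pi / 2)) + pi / 2"
      by (simp add: algebra_simps)
    then have "cos (b * y + \<phi> + real (Suc m) * (pi / 2)) = - sin (b * y + \<phi> + real m * (pi / 2))"
      by (simp only: cos_add cos_pi_half sin_pi_half)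
    then show ?thesis unfolding F_def by (auto intro!: derivative_eq_intros)
  qed
  have bound: "\<bar>F K y\<bar> \<le> \<bar>b\<bar> ^ K" for y
    unfolding F_def by (simp add: abs_mult power_abs mult_left_le)
  show ?thesis
    using chebyshev_interpolation_error[OF assms(1) deriv bound assms(2)] unfolding F_def by simp
qed

lemma cis_chebyshev_interpolation_error:
  assumes K: "K \<ge> 1" and x: "x \<in> {-1..1}"
  shows "cmod (exp (\<i> * of_real (b * x)) -
            (\<Sum>i<K. exp (\<i> * of_real (b * cheb_node K i)) * of_real (poly (cheb_lagrange K i) x)))
           \<le> 4 * (\<bar>b\<bar> / 2) ^ K / fact K" (is "cmod ?err \<le> _")
proof -
  define R where "R = cos (b * x) - (\<Sum>i<K. cos (b * cheb_node K i) * poly (cheb_lagrange K i) x)"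
  define I where "I = sin (b * x) - (\<Sum>i<K. sin (b * cheb_node K i) * poly (cheb_lagrange K i) x)"
  have R: "\<bar>R\<bar> \<le> \<bar>b\<bar> ^ K / fact K / 2 ^ (K - 1)"
    using cos_chebyshev_interpolation_error[OF K x, of b 0] unfolding R_def by simp
  have cos_shift: "cos (y + - (pi / 2)) = sin y" for y
    by (simp only: cos_add cos_minus sin_minus cos_pi_half sin_pi_half)
  have I: "\<bar>I\<bar> \<le> \<bar>b\<bar> ^ K / fact K / 2 ^ (K - 1)"
    using cos_chebyshev_interpolation_error[OF K x, of b "- (pi / 2)"] unfolding I_def cos_shift .
  have exp_i: "exp (\<i> * complex_of_real y) = complex_of_real (cos y) + \<i> * complex_of_real (sin y)" for y
    by (simp add: cis_conv_exp[symmetric] complex_eq_iff)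
  have "?err = complex_of_real R + \<i> * complex_of_real I"
    unfolding exp_i by (simp add: complex_eq_iff R_def I_def)
  then have "cmod ?err \<le> \<bar>R\<bar> + \<bar>I\<bar>"
    using cmod_le[of "complex_of_real R + \<i> * complex_of_real I"] by simp
  also have "\<dots> \<le> 2 * (\<bar>b\<bar> ^ K / fact K / 2 ^ (K - 1))" using R I by linarith
  also have "\<dots> = 4 * (\<bar>b\<bar> / 2) ^ K / fact K"
    using K by (cases K) (auto simp: power_divide)
  finally show ?thesis .
qed

section \<open>The rank bound and its asymptotics\<close>

lemma lambertW_pos:
  assumes "y > 0"
  shows "lambertW y > 0" "lambertW y * exp (lambertW y) = y"
proof -
  have pos: "w > 0" if "w * exp w = y" for w :: real
  proof (rule ccontr)
    assume "\<not> w > 0"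
    then have "w * exp w \<le> 0" by (simp add: mult_nonpos_nonneg)
    then show False using that assms by simp
  qed
  have mono: "w1 * exp w1 < w2 * exp w2" if "0 < w1" "w1 < w2" for w1 w2 :: real
    using mult_strict_mono[of w1 w2 "exp w1" "exp w2"] that by simp
  have "\<exists>w\<ge>0. w \<le> y \<and> w * exp w = y"
    using assms by (intro IVT) (auto intro!: continuous_intros)
  then obtain w where w: "0 \<le> w" "w * exp w = y" by blast
  have "\<exists>!w. w \<ge> -1 \<and> w * exp w = y"
  proof
    show "w \<ge> -1 \<and> w * exp w = y" using w by simp
    fix v assume v: "v \<ge> -1 \<and> v * exp v = y"
    show "v = w"
      using mono[of v w] mono[of w v] pos[of v] pos[of w] v w by (cases v w rule: linorder_cases) auto
  qed
  then have "lambertW y \<ge> -1 \<and> lambertW y * exp (lambertW y) = y"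
    unfolding lambertW_def by (rule theI')
  then show "lambertW y > 0" "lambertW y * exp (lambertW y) = y" using pos by auto
qed

lemma lambertW_ge_half_ln:
  assumes y: "y > 1"
  shows "ln y / 2 \<le> lambertW y"
proof (rule ccontr)
  define w where "w = lambertW y"
  define z where "z = exp (ln y / 2)"
  have z: "z * z = y" "z > 1" unfolding z_def using y by (simp_all add: exp_add[symmetric])
  assume "\<not> ln y / 2 \<le> lambertW y"
  then have "w * exp w < (ln y / 2) * exp (ln y / 2)"
    using lambertW_pos[of y] y unfolding w_def by (intro mult_strict_mono) auto
  also have "\<dots> = z * ln z" unfolding z_def by simp
  also have "\<dots> \<le> z * (z - 1)" using z ln_le_minus_one[of z] by (intro mult_left_mono) auto
  also have "\<dots> < y" using z by (simp add: algebra_simps)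
  finally show False using lambertW_pos[of y] y unfolding w_def by simp
qed

lemma Kbound_ge:
  "5 * \<gamma> * exp (lambertW (ln (140 / \<epsilon>) / (5 * \<gamma>))) \<le> real (Kbound \<gamma> \<epsilon>)"
  unfolding Kbound_def by linarith

lemma Kbound_le:
  assumes "\<gamma> > 0"
  shows "real (Kbound \<gamma> \<epsilon>) \<le> 4 + 5 * \<gamma> * exp (lambertW (ln (140 / \<epsilon>) / (5 * \<gamma>)))"
proof -
  define a where "a = 5 * \<gamma> * exp (lambertW (ln (140 / \<epsilon>) / (5 * \<gamma>)))"
  have "real (nat \<lceil>a\<rceil>) \<le> a + 1"
    using assms of_int_ceiling_le_add_one[of a] unfolding a_def by simp
  moreover have "real (Kbound \<gamma> \<epsilon>) \<le> 3 + real (nat \<lceil>a\<rceil>)"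
    unfolding Kbound_def a_def by (simp add: max_def)
  ultimately show ?thesis by (simp add: a_def)
qed

text \<open>With \<open>L = ln (140/\<epsilon>)\<close> and \<open>w = W (L/(5\<gamma>))\<close>, \<open>K \<ge> 5\<gamma> e\<^sup>w\<close> gives \<open>K ln (K/(5\<gamma>)) \<ge> K w \<ge> 5\<gamma> w e\<^sup>w = L\<close>.\<close>
lemma Kbound_error_le:
  assumes "0 < \<epsilon>" "\<epsilon> < 1" "0 < \<gamma>"
  shows "140 * (5 * \<gamma> / real (Kbound \<gamma> \<epsilon>)) ^ Kbound \<gamma> \<epsilon> \<le> \<epsilon>"
proof -
  define L where "L = ln (140 / \<epsilon>)"
  define w where "w = lambertW (L / (5 * \<gamma>))"
  define K where "K = Kbound \<gamma> \<epsilon>"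
  have "L > 0" unfolding L_def using assms by simp
  then have w: "w > 0" "w * exp w = L / (5 * \<gamma>)"
    using lambertW_pos[of "L / (5 * \<gamma>)"] assms unfolding w_def by auto
  have K_ge: "5 * \<gamma> * exp w \<le> real K" unfolding K_def w_def L_def by (rule Kbound_ge)
  then have K_pos: "real K > 0" using assms by (smt (verit) exp_gt_zero mult_pos_pos)
  have "exp w \<le> real K / (5 * \<gamma>)" using K_ge assms by (simp add: field_simps)
  then have w_le: "w \<le> ln (real K / (5 * \<gamma>))"
    using assms K_pos by (metis exp_gt_zero ln_exp ln_mono order_less_le_trans)
  have "L = 5 * \<gamma> * (w * exp w)" using w assms by simp
  also have "\<dots> = w * (5 * \<gamma> * exp w)" by simp
  also have "\<dots> \<le> w * real K" using w K_ge by (intro mult_left_mono) auto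
  also have "\<dots> \<le> ln (real K / (5 * \<gamma>)) * real K" using w_le K_pos by (intro mult_right_mono) auto
  also have "\<dots> = ln ((real K / (5 * \<gamma>)) ^ K)" using K_pos assms by (simp add: ln_realpow)
  finally have "140 / \<epsilon> \<le> (real K / (5 * \<gamma>)) ^ K"
    unfolding L_def using assms K_pos by (subst (asm) ln_le_cancel_iff) auto
  then show ?thesis
    unfolding K_def[symmetric] using assms K_pos by (simp add: power_divide field_simps)
qed

lemma Kbound_le_ln_over_lnln:
  assumes \<gamma>: "0 < \<gamma>" "\<gamma> \<le> 1/2" and \<epsilon>: "0 < \<epsilon>" "\<epsilon> < 1" and lnln: "2 < ln (ln (140 / \<epsilon>))"
  shows "real (Kbound \<gamma> \<epsilon>) \<le> 4 + 2 * ln (140 / \<epsilon>) / (ln (ln (140 / \<epsilon>)) - 1)"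
proof -
  define L where "L = ln (140 / \<epsilon>)"
  define y where "y = L / (5 * \<gamma>)"
  define w where "w = lambertW y"
  have L_pos: "L > 0" unfolding L_def using \<epsilon> by simp
  have "L > exp 2" using lnln L_pos unfolding L_def by (metis exp_less_cancel_iff exp_ln)
  then have "L > 3" using exp_ge_add_one_self[of 2] by simp
  then have y: "y > 1" unfolding y_def using \<gamma> by (simp add: field_simps)
  have w: "w > 0" "w * exp w = y" using lambertW_pos[of y] y unfolding w_def by auto
  have "5 * \<gamma> \<le> exp 1" using \<gamma> exp_lower_Taylor_quadratic[of 1] by simp
  then have "ln (5 * \<gamma>) \<le> 1" using \<gamma> by (metis ln_exp ln_mono mult_pos_pos zero_less_numeral)
  then have ln_y: "ln y \<ge> ln L - 1" unfolding y_def using \<gamma> L_pos by (simp add: ln_div)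
  have "5 * \<gamma> * exp w = L / w" using w \<gamma> unfolding y_def by (simp add: field_simps)
  also have "\<dots> \<le> L / (ln y / 2)"
    using lambertW_ge_half_ln[OF y] L_pos ln_y lnln unfolding w_def L_def[symmetric]
    by (intro divide_left_mono) auto
  also have "\<dots> \<le> 2 * L / (ln L - 1)"
    using ln_y lnln L_pos unfolding L_def[symmetric] by (simp add: frac_le)
  finally show ?thesis using Kbound_le[OF \<gamma>(1), of \<epsilon>] unfolding w_def y_def L_def by linarith
qed

lemma Kbound_bigo:
  assumes "0 < \<gamma>" "\<gamma> \<le> 1/2"
  shows "(\<lambda>e. real (Kbound \<gamma> e)) \<in> O[at_right 0](\<lambda>e. ln (1 / e) / ln (ln (1 / e)))"
proof (rule landau_o.big_trans)
  have "eventually (\<lambda>e::real. e < 1) (at_right 0)"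
    and "eventually (\<lambda>e::real. 2 < ln (ln (140 / e))) (at_right 0)"
    by real_asymp+
  then have "eventually (\<lambda>e::real. 0 < e \<and> e < 1 \<and> 2 < ln (ln (140 / e))) (at_right 0)"
    using eventually_at_right_less[of 0] by eventually_elim auto
  then show "(\<lambda>e. real (Kbound \<gamma> e)) \<in>
      O[at_right 0](\<lambda>e. 4 + 2 * ln (140 / e) / (ln (ln (140 / e)) - 1))"
  proof (intro landau_o.big_mono, elim eventually_mono)
    fix e :: real assume "0 < e \<and> e < 1 \<and> 2 < ln (ln (140 / e))"
    then show "norm (real (Kbound \<gamma> e)) \<le> norm (4 + 2 * ln (140 / e) / (ln (ln (140 / e)) - 1))"
      using Kbound_le_ln_over_lnln[OF assms, of e] by simp
  qed
  show "(\<lambda>e::real. 4 + 2 * ln (140 / e) / (ln (ln (140 / e)) - 1)) \<in>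
      O[at_right 0](\<lambda>e. ln (1 / e) / ln (ln (1 / e)))"
    by real_asymp
qed

section \<open>Low-rank approximation of the matrix\<close>

lemma fact_ge_pow_div_exp: "real K ^ K \<le> exp (real K) * fact K"
proof -
  obtain t where "exp (real K) =
      (\<Sum>m<Suc K. real K ^ m / fact m) + exp t / fact (Suc K) * real K ^ Suc K"
    using Maclaurin_exp_le[of "real K" "Suc K"] by blast
  moreover have "real K ^ K / fact K \<le> (\<Sum>m<Suc K. real K ^ m / fact m)"
    by (rule member_le_sum) auto
  ultimately have "real K ^ K / fact K \<le> exp (real K)" by simp
  then show ?thesis by (simp add: divide_le_eq mult.commute)
qed

text \<open>Uses \<open>K! \<ge> (K/e)\<^sup>K\<close> and \<open>\<pi> e \<le> 10\<close>; the constant \<open>140\<close> only needs to exceed \<open>4\<close>.\<close>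
lemma interpolation_bound_le_Kbound_error:
  assumes K: "K \<ge> 1" and \<gamma>: "\<gamma> > 0"
  shows "4 * (pi * \<gamma> / 2) ^ K / fact K \<le> 140 * (5 * \<gamma> / real K) ^ K"
proof -
  have K_pos: "real K > 0" using K by simp
  have "(pi * \<gamma> / 2) ^ K / fact K \<le> (pi * \<gamma> / 2) ^ K * (exp (real K) / real K ^ K)"
    using fact_ge_pow_div_exp[of K] K_pos \<gamma> by (simp add: field_simps)
  also have "\<dots> = (pi * exp 1 * \<gamma> / (2 * real K)) ^ K"
    using exp_of_nat_mult[of K "1::real"] by (simp add: power_divide power_mult_distrib)
  also have "\<dots> \<le> (5 * \<gamma> / real K) ^ K"
  proof (rule power_mono)
    have "pi * exp 1 \<le> 3.1415926535899 * 2.72"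
      using pi_approx e_less_272 by (intro mult_mono) auto
    then show "pi * exp 1 * \<gamma> / (2 * real K) \<le> 5 * \<gamma> / real K"
      using K_pos \<gamma> by (simp add: field_simps)
  qed (use \<gamma> in simp)
  finally have "(pi * \<gamma> / 2) ^ K / fact K \<le> (5 * \<gamma> / real K) ^ K" .
  moreover have "0 \<le> (5 * \<gamma> / real K) ^ K" using \<gamma> by simp
  ultimately show ?thesis by linarith
qed

lemma rank_sum_outer_products_le:
  fixes u v :: "nat \<Rightarrow> nat \<Rightarrow> 'a :: field"
  shows "vec_space.rank N (mat N N (\<lambda>(j, k). \<Sum>i<m. u i j * v i k)) \<le> m"
proof (induction m)
  case 0
  have "mat N N (\<lambda>(j, k). \<Sum>i<(0::nat). u i j * v i k) = 0\<^sub>m N N"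
    by (rule eq_matI) auto
  then show ?case using vec_space.rank_0I by (metis le_refl)
next
  case (Suc m)
  have split: "mat N N (\<lambda>(j, k). \<Sum>i<Suc m. u i j * v i k) =
      mat N N (\<lambda>(j, k). \<Sum>i<m. u i j * v i k) + mat N N (\<lambda>(j, k). u m j * v m k)"
    by (rule eq_matI) auto
  have "vec_space.rank N (mat N N (\<lambda>(j, k). \<Sum>i<Suc m. u i j * v i k)) \<le>
      vec_space.rank N (mat N N (\<lambda>(j, k). \<Sum>i<m. u i j * v i k)) +
      vec_space.rank N (mat N N (\<lambda>(j, k). u m j * v m k))"
    unfolding split by (rule vec_space.rank_subadditive[where nc = N]) auto
  moreover have "vec_space.rank N (mat N N (\<lambda>(j, k). u m j * v m k)) \<le> 1"
    by (rule vec_space.rank_le_1_product_entries[where f = "u m" and g = "v m" and nc = N]) auto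
  ultimately show ?case using Suc by linarith
qed

lemma nudft_mat_low_rank_approx:
  fixes N :: nat and \<epsilon> \<gamma> :: real and x \<omega> :: "nat \<Rightarrow> real"
  assumes N: "N \<ge> 1" and \<epsilon>: "0 < \<epsilon>" "\<epsilon> < 1" and \<gamma>: "0 < \<gamma>"
    and x: "\<And>j. j < N \<Longrightarrow> \<bar>x j - real j / real N\<bar> \<le> \<gamma> / real N"
    and \<omega>: "\<And>k. k < N \<Longrightarrow> \<omega> k \<in> {0..real N}"
  shows "\<exists>AK :: complex mat. AK \<in> carrier_mat N N \<and> vec_space.rank N AK \<le> Kbound \<gamma> \<epsilon> \<and>
           (\<forall>j<N. \<forall>k<N. cmod (nudft_mat N x \<omega> $$ (j, k) - AK $$ (j, k)) \<le> \<epsilon>)"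
proof -
  define K where "K = Kbound \<gamma> \<epsilon>"
  have K: "K \<ge> 1" unfolding K_def Kbound_def by simp
  have N_pos: "real N > 0" using N by simp
  define \<beta> where "\<beta> j = - (pi * (x j - real j / real N) * real N)" for j
  define s where "s k = 2 * \<omega> k / real N - 1" for k
  define u where "u i j = exp (\<i> * of_real (\<beta> j)) * exp (\<i> * of_real (\<beta> j * cheb_node K i))" for i j
  define v where "v i k = complex_of_real (poly (cheb_lagrange K i) (s k))" for i k
  define AK where "AK = mat N N (\<lambda>(j, k). \<Sum>i<K. u i j * v i k)"
  have "cmod (nudft_mat N x \<omega> $$ (j, k) - AK $$ (j, k)) \<le> \<epsilon>" if j: "j < N" and k: "k < N" for j k
  proof -
    have s_in: "s k \<in> {-1..1}" using \<omega>[OF k] N_pos unfolding s_def by (auto simp: field_simps)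
    have "\<bar>\<beta> j\<bar> = pi * (\<bar>x j - real j / real N\<bar> * real N)" unfolding \<beta>_def by (simp add: abs_mult)
    also have "\<dots> \<le> pi * \<gamma>" using x[OF j] N_pos by (simp add: field_simps)
    finally have \<beta>_le: "\<bar>\<beta> j\<bar> \<le> pi * \<gamma>" .
    have "- (2 * of_real pi * \<i>) * complex_of_real ((x j - real j / real N) * \<omega> k) =
        \<i> * of_real (\<beta> j) + \<i> * of_real (\<beta> j * s k)"
      unfolding \<beta>_def s_def using N_pos by (simp add: field_simps)
    then have "nudft_mat N x \<omega> $$ (j, k) = exp (\<i> * of_real (\<beta> j)) * exp (\<i> * of_real (\<beta> j * s k))"
      unfolding nudft_mat_def using j k by (simp add: exp_add)
    moreover have "AK $$ (j, k) = exp (\<i> * of_real (\<beta> j)) *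
        (\<Sum>i<K. exp (\<i> * of_real (\<beta> j * cheb_node K i)) * of_real (poly (cheb_lagrange K i) (s k)))"
      unfolding AK_def u_def v_def using j k by (simp add: sum_distrib_left mult.assoc)
    ultimately have "cmod (nudft_mat N x \<omega> $$ (j, k) - AK $$ (j, k)) =
        cmod (exp (\<i> * of_real (\<beta> j * s k)) -
          (\<Sum>i<K. exp (\<i> * of_real (\<beta> j * cheb_node K i)) * of_real (poly (cheb_lagrange K i) (s k))))"
      by (simp only: right_diff_distrib[symmetric] norm_mult norm_exp_i_times mult_1)
    also have "\<dots> \<le> 4 * (\<bar>\<beta> j\<bar> / 2) ^ K / fact K"
      by (rule cis_chebyshev_interpolation_error[OF K s_in])
    also have "\<dots> \<le> 4 * (pi * \<gamma> / 2) ^ K / fact K"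
      using \<beta>_le by (intro divide_right_mono mult_left_mono power_mono) auto
    also have "\<dots> \<le> 140 * (5 * \<gamma> / real K) ^ K"
      by (rule interpolation_bound_le_Kbound_error[OF K \<gamma>])
    also have "\<dots> \<le> \<epsilon>" unfolding K_def by (rule Kbound_error_le[OF \<epsilon> \<gamma>])
    finally show ?thesis .
  qed
  moreover have "AK \<in> carrier_mat N N" unfolding AK_def by simp
  moreover have "vec_space.rank N AK \<le> K" unfolding AK_def by (rule rank_sum_outer_products_le)
  ultimately show ?thesis unfolding K_def by blast
qed

theorem theoremA2:
  fixes N :: nat and \<epsilon> \<gamma> :: real and x \<omega> :: "nat \<Rightarrow> real"
  assumes "N \<ge> 1" and "0 < \<epsilon>" and "\<epsilon> < 1" and "0 < \<gamma>" and "\<gamma> \<le> 1/2"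
    and "\<And>j. j < N \<Longrightarrow> \<bar>x j - real j / real N\<bar> \<le> \<gamma> / real N"
    and "\<And>k. k < N \<Longrightarrow> \<omega> k \<in> {0..real N}"
  shows "(\<exists>AK :: complex mat. AK \<in> carrier_mat N N \<and>
            vec_space.rank N AK \<le> Kbound \<gamma> \<epsilon> \<and>
            (\<forall>j<N. \<forall>k<N. cmod (nudft_mat N x \<omega> $$ (j, k) - AK $$ (j, k)) \<le> \<epsilon>))
         \<and> (\<lambda>e. real (Kbound \<gamma> e)) \<in> O[at_right 0](\<lambda>e. ln (1 / e) / ln (ln (1 / e)))"
  using nudft_mat_low_rank_approx[of N \<epsilon> \<gamma> x \<omega>] Kbound_bigo[of \<gamma>] assms by blast

end
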